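(* Let $p\in(1,\infty)$, let $A$ be a norm closed subalgebra of $\mathcal B(L^p(X,\mu))$, let $B=L^\infty(Y,\nu)$, regarded as the algebra of multiplication operators on $L^p(Y,\nu)$, and let $\varphi:A\to B$ be a bounded linear map. Then $\|\varphi\|_{pcb}=\|\varphi\|$.
   Context: $M_n^p=\mathcal B(\ell^p_n)$; for a norm closed subalgebra $A\subset\mathcal B(L^p(X,\mu))$, $M_n^p\otimes_pA\subset\mathcal B(L^p(\{1,\dots,n\}\times X))$ is the algebra of matrices $[a_{ij}]$ with entries in $A$. For linear $\varphi:A\to B$, $\varphi_n([a_{ij}])=[\varphi(a_{ij})]$ and $\|\varphi\|_{pcb}=\sup_n\|\varphi_n\|$. *)

theory Defs
  imports "HOL-Analysis.Analysis"
begin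

text \<open>Complex L^p spaces, represented by representatives (functions), with
  equality almost everywhere handled explicitly.\<close>

type_synonym 'a Lp_op = "('a \<Rightarrow> complex) \<Rightarrow> 'a \<Rightarrow> complex"

definition Lp :: "real \<Rightarrow> 'a measure \<Rightarrow> ('a \<Rightarrow> complex) set" where
  "Lp p M = {f. f \<in> borel_measurable M \<and> integrable M (\<lambda>x. cmod (f x) powr p)}"

definition Lp_norm :: "real \<Rightarrow> 'a measure \<Rightarrow> ('a \<Rightarrow> complex) \<Rightarrow> real" where
  "Lp_norm p M f = (\<integral>x. cmod (f x) powr p \<partial>M) powr (1 / p)"

definition ae_eq :: "'a measure \<Rightarrow> ('a \<Rightarrow> complex) \<Rightarrow> ('a \<Rightarrow> complex) \<Rightarrow> bool" where
  "ae_eq M f g \<longleftrightarrow> (AE x in M. f x = g x)"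

definition is_bounded_op :: "real \<Rightarrow> 'a measure \<Rightarrow> 'a Lp_op \<Rightarrow> bool" where
  "is_bounded_op p M T \<longleftrightarrow>
     (\<forall>f\<in>Lp p M. T f \<in> Lp p M) \<and>
     (\<forall>f\<in>Lp p M. \<forall>g\<in>Lp p M. ae_eq M (T (\<lambda>x. f x + g x)) (\<lambda>x. T f x + T g x)) \<and>
     (\<forall>c. \<forall>f\<in>Lp p M. ae_eq M (T (\<lambda>x. c * f x)) (\<lambda>x. c * T f x)) \<and>
     (\<exists>C. \<forall>f\<in>Lp p M. Lp_norm p M (T f) \<le> C * Lp_norm p M f)"

definition op_norm :: "real \<Rightarrow> 'a measure \<Rightarrow> 'a Lp_op \<Rightarrow> real" where
  "op_norm p M T = (SUP f \<in> {f \<in> Lp p M. Lp_norm p M f \<le> 1}. Lp_norm p M (T f))"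

definition op_eq :: "real \<Rightarrow> 'a measure \<Rightarrow> 'a Lp_op \<Rightarrow> 'a Lp_op \<Rightarrow> bool" where
  "op_eq p M S T \<longleftrightarrow> (\<forall>f\<in>Lp p M. ae_eq M (S f) (T f))"

definition op_add :: "'a Lp_op \<Rightarrow> 'a Lp_op \<Rightarrow> 'a Lp_op" where
  "op_add S T = (\<lambda>f x. S f x + T f x)"

definition op_scale :: "complex \<Rightarrow> 'a Lp_op \<Rightarrow> 'a Lp_op" where
  "op_scale c T = (\<lambda>f x. c * T f x)"

definition op_diff :: "'a Lp_op \<Rightarrow> 'a Lp_op \<Rightarrow> 'a Lp_op" where
  "op_diff S T = (\<lambda>f x. S f x - T f x)"

definition op_comp :: "'a Lp_op \<Rightarrow> 'a Lp_op \<Rightarrow> 'a Lp_op" where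
  "op_comp S T = (\<lambda>f. S (T f))"

definition norm_closed_subalgebra :: "real \<Rightarrow> 'a measure \<Rightarrow> 'a Lp_op set \<Rightarrow> bool" where
  "norm_closed_subalgebra p M A \<longleftrightarrow>
     A \<subseteq> {T. is_bounded_op p M T} \<and>
     (\<lambda>f x. 0) \<in> A \<and>
     (\<forall>S\<in>A. \<forall>T\<in>A. op_add S T \<in> A) \<and>
     (\<forall>c. \<forall>T\<in>A. op_scale c T \<in> A) \<and>
     (\<forall>S\<in>A. \<forall>T\<in>A. op_comp S T \<in> A) \<and>
     (\<forall>a T. (\<forall>k. a k \<in> A) \<longrightarrow> is_bounded_op p M T \<longrightarrow>
        (\<lambda>k. op_norm p M (op_diff (a k) T)) \<longlonglongrightarrow> 0 \<longrightarrow> T \<in> A)"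

definition Linf_mult_ops :: "'b measure \<Rightarrow> 'b Lp_op set" where
  "Linf_mult_ops N = {T. \<exists>g. g \<in> borel_measurable N \<and> (\<exists>C. AE y in N. cmod (g y) \<le> C) \<and>
                           T = (\<lambda>f y. g y * f y)}"

text \<open>L^p({0..<n} \<times> X) identified with n-tuples of elements of L^p(X),
  with norm (\<Sum>i. \<parallel>F i\<parallel>_p^p)^(1/p); n \<times> n matrices act by matrix multiplication.\<close>
definition Lp_n :: "real \<Rightarrow> 'a measure \<Rightarrow> nat \<Rightarrow> (nat \<Rightarrow> 'a \<Rightarrow> complex) set" where
  "Lp_n p M n = {F. \<forall>i<n. F i \<in> Lp p M}"

definition Lp_n_norm :: "real \<Rightarrow> 'a measure \<Rightarrow> nat \<Rightarrow> (nat \<Rightarrow> 'a \<Rightarrow> complex) \<Rightarrow> real" where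
  "Lp_n_norm p M n F = (\<Sum>i<n. Lp_norm p M (F i) powr p) powr (1 / p)"

definition mat_apply :: "nat \<Rightarrow> (nat \<Rightarrow> nat \<Rightarrow> 'a Lp_op) \<Rightarrow> (nat \<Rightarrow> 'a \<Rightarrow> complex) \<Rightarrow> nat \<Rightarrow> 'a \<Rightarrow> complex" where
  "mat_apply n a F = (\<lambda>i x. \<Sum>j<n. a i j (F j) x)"

definition mat_norm :: "real \<Rightarrow> 'a measure \<Rightarrow> nat \<Rightarrow> (nat \<Rightarrow> nat \<Rightarrow> 'a Lp_op) \<Rightarrow> real" where
  "mat_norm p M n a =
     (SUP F \<in> {F \<in> Lp_n p M n. Lp_n_norm p M n F \<le> 1}. Lp_n_norm p M n (mat_apply n a F))"

definition map_norm :: "real \<Rightarrow> 'a measure \<Rightarrow> 'b measure \<Rightarrow> 'a Lp_op set \<Rightarrow> ('a Lp_op \<Rightarrow> 'b Lp_op) \<Rightarrow> real" where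
  "map_norm p M N A \<phi> = (SUP a \<in> {a \<in> A. op_norm p M a \<le> 1}. op_norm p N (\<phi> a))"

definition pcb_norm :: "real \<Rightarrow> 'a measure \<Rightarrow> 'b measure \<Rightarrow> 'a Lp_op set \<Rightarrow> ('a Lp_op \<Rightarrow> 'b Lp_op) \<Rightarrow> ereal" where
  "pcb_norm p M N A \<phi> =
     (SUP n \<in> {1..}. SUP a \<in> {a. (\<forall>i<n. \<forall>j<n. a i j \<in> A) \<and> mat_norm p M n a \<le> 1}.
        ereal (mat_norm p N n (\<lambda>i j. \<phi> (a i j))))"

end

theory Submission
  imports Defs
begin

text \<open>
  Every \<open>\<phi>(a)\<close> is multiplication by some \<open>g\<^sub>a \<in> L\<^sup>\<infinity>(N)\<close>; let \<open>q\<close> be the exponent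
  conjugate to \<open>p\<close>. For a matrix \<open>[a\<^sub>i\<^sub>j]\<close> of norm at most 1 and scalar vectors
  \<open>\<eta>, \<xi>\<close>, the single operator \<open>\<Sum>\<^sub>i\<^sub>j \<eta>\<^sub>i \<xi>\<^sub>j a\<^sub>i\<^sub>j\<close> of \<open>A\<close> has norm at most
  \<open>\<parallel>\<eta>\<parallel>\<^sub>q \<parallel>\<xi>\<parallel>\<^sub>p\<close>, so the multiplier of its image gives
  \<open>|\<Sum>\<^sub>i\<^sub>j \<eta>\<^sub>i \<xi>\<^sub>j g\<^sub>i\<^sub>j(y)| \<le> \<parallel>\<phi>\<parallel> \<parallel>\<eta>\<parallel>\<^sub>q \<parallel>\<xi>\<parallel>\<^sub>p\<close> for almost every \<open>y\<close>.
  Taking \<open>\<eta>, \<xi>\<close> from a countable dense set, for almost every \<open>y\<close> the scalar matrix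
  \<open>[g\<^sub>i\<^sub>j(y)]\<close> has norm at most \<open>\<parallel>\<phi>\<parallel>\<close> on \<open>\<ell>\<^sup>p\<^sub>n\<close> by duality, and integrating
  this pointwise bound over \<open>y\<close> gives \<open>\<parallel>\<phi>\<^sub>n\<parallel> \<le> \<parallel>\<phi>\<parallel>\<close>. The reverse inequality is
  the case \<open>n = 1\<close>.
\<close>

section \<open>Finite sequences\<close>

definition ell_norm :: "real \<Rightarrow> nat \<Rightarrow> (nat \<Rightarrow> complex) \<Rightarrow> real" where
  "ell_norm r n x = (\<Sum>i<n. cmod (x i) powr r) powr (1 / r)"

lemma ell_norm_nonneg: "ell_norm r n x \<ge> 0"
  by (simp add: ell_norm_def)

lemma ell_norm_powr: "r > 0 \<Longrightarrow> ell_norm r n x powr r = (\<Sum>i<n. cmod (x i) powr r)"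
  by (simp add: ell_norm_def powr_powr sum_nonneg)

lemma ell_norm_eq_0D:
  assumes "ell_norm r n x = 0" "r > 0" "i < n"
  shows "x i = 0"
proof -
  have "(\<Sum>i<n. cmod (x i) powr r) = 0"
    using assms(1) by (simp add: ell_norm_def)
  then have "\<forall>i\<in>{..<n}. cmod (x i) powr r = 0"
    by (subst sum_nonneg_eq_0_iff[symmetric]) auto
  then show ?thesis using assms(3) by auto
qed

lemma ell_norm_mult_const:
  assumes "r > 0"
  shows "ell_norm r n (\<lambda>i. c * x i) = cmod c * ell_norm r n x"
  using assms by (simp add: ell_norm_def norm_mult powr_mult sum_distrib_left[symmetric] powr_powr)

lemma tendsto_ell_norm:
  assumes "r > 0" and "\<forall>i<n. (\<lambda>k. x k i) \<longlonglongrightarrow> y i"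
  shows "(\<lambda>k. ell_norm r n (x k)) \<longlonglongrightarrow> ell_norm r n y"
  unfolding ell_norm_def using assms
  by (intro tendsto_intros) (auto intro!: always_eventually sum_nonneg)

lemma conjugate_exponent:
  fixes p :: real
  assumes "1 < p"
  shows "1 < p / (p - 1)" "1 / p + 1 / (p / (p - 1)) = 1"
proof -
  have "0 < p - 1" using assms by simp
  then show "1 < p / (p - 1)" using assms by (simp add: less_divide_eq_1_pos)
  show "1 / p + 1 / (p / (p - 1)) = 1" using assms by (simp add: field_simps)
qed

lemma Holder_inequality_sum:
  fixes x y :: "nat \<Rightarrow> real"
  assumes p: "p > 1" and q: "q > 1" and pq: "1/p + 1/q = 1"
    and x: "\<And>i. x i \<ge> 0" and y: "\<And>i. y i \<ge> 0"
  shows "(\<Sum>i<n. x i * y i) \<le> (\<Sum>i<n. x i powr q) powr (1/q) * (\<Sum>i<n. y i powr p) powr (1/p)"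
proof -
  define X where "X = (\<Sum>i<n. x i powr q)"
  define Y where "Y = (\<Sum>i<n. y i powr p)"
  have "X \<ge> 0" "Y \<ge> 0"
    unfolding X_def Y_def by (auto intro: sum_nonneg)
  show ?thesis
  proof (cases "X = 0 \<or> Y = 0")
    case True
    then have "\<forall>i<n. x i * y i = 0"
      using q p x y by (auto simp: X_def Y_def sum_nonneg_eq_0_iff)
    then have "(\<Sum>i<n. x i * y i) = 0" by (intro sum.neutral) auto
    then show ?thesis
      using \<open>X \<ge> 0\<close> \<open>Y \<ge> 0\<close> by (simp add: X_def[symmetric] Y_def[symmetric])
  next
    case False
    with \<open>X \<ge> 0\<close> \<open>Y \<ge> 0\<close> have "X > 0" "Y > 0" by auto
    define a where "a = X powr (1/q)"
    define b where "b = Y powr (1/p)"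
    have "a > 0" "b > 0" using \<open>X > 0\<close> \<open>Y > 0\<close> by (auto simp: a_def b_def)
    have xa: "(x i / a) powr q = x i powr q / X" for i
      using \<open>a > 0\<close> \<open>X > 0\<close> x q by (simp add: powr_divide a_def powr_powr)
    have yb: "(y i / b) powr p = y i powr p / Y" for i
      using \<open>b > 0\<close> \<open>Y > 0\<close> y p by (simp add: powr_divide b_def powr_powr)
    have "(\<Sum>i<n. (x i / a) * (y i / b)) \<le> (\<Sum>i<n. (x i / a) powr q / q + (y i / b) powr p / p)"
      by (rule sum_mono, rule Youngs_inequality[OF q p]) (use pq x y \<open>a > 0\<close> \<open>b > 0\<close> in auto)
    also have "\<dots> = (\<Sum>i<n. x i powr q) / X / q + (\<Sum>i<n. y i powr p) / Y / p"
      by (simp add: xa yb sum.distrib sum_divide_distrib)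
    also have "\<dots> = 1"
      using \<open>X > 0\<close> \<open>Y > 0\<close> pq by (simp add: X_def[symmetric] Y_def[symmetric])
    finally have "(\<Sum>i<n. x i * y i) / (a * b) \<le> 1"
      by (simp add: sum_divide_distrib)
    then show ?thesis
      using \<open>a > 0\<close> \<open>b > 0\<close> by (simp add: a_def b_def X_def Y_def pos_divide_le_eq)
  qed
qed

lemma norm_sum_mult_le_ell_norm:
  assumes "1 < p"
  shows "cmod (\<Sum>i<n. \<eta> i * z i) \<le> ell_norm (p / (p - 1)) n \<eta> * ell_norm p n z"
proof -
  have "cmod (\<Sum>i<n. \<eta> i * z i) \<le> (\<Sum>i<n. cmod (\<eta> i) * cmod (z i))"
    by (rule order_trans[OF norm_sum]) (simp add: norm_mult)
  also have "\<dots> \<le> ell_norm (p / (p - 1)) n \<eta> * ell_norm p n z"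
    unfolding ell_norm_def
    by (rule Holder_inequality_sum) (use assms conjugate_exponent[OF assms] in auto)
  finally show ?thesis .
qed

lemma norming_vector_exists:
  assumes "1 < p"
  obtains \<eta> where "(\<Sum>i<n. \<eta> i * w i) = of_real (\<Sum>i<n. cmod (w i) powr p)"
    and "ell_norm (p / (p - 1)) n \<eta> = (\<Sum>i<n. cmod (w i) powr p) powr (1 - 1 / p)"
proof
  define \<eta> where "\<eta> i = cnj (w i) * of_real (cmod (w i) powr (p - 2))" for i
  have "\<eta> i * w i = of_real (cmod (w i) powr p)" for i
  proof (cases "w i = 0")
    case False
    have "cnj (w i) * w i = of_real (cmod (w i) ^ 2)"
      by (metis complex_norm_square mult.commute)
    then have "\<eta> i * w i = of_real (cmod (w i) ^ 2 * cmod (w i) powr (p - 2))"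
      by (simp add: \<eta>_def mult_ac)
    also have "cmod (w i) ^ 2 * cmod (w i) powr (p - 2) = cmod (w i) powr p"
      using powr_add[of "cmod (w i)" 2 "p - 2"] False by (simp add: powr_numeral)
    finally show ?thesis by simp
  qed (simp add: \<eta>_def)
  then show "(\<Sum>i<n. \<eta> i * w i) = of_real (\<Sum>i<n. cmod (w i) powr p)"
    by simp
  have "cmod (\<eta> i) powr (p / (p - 1)) = cmod (w i) powr p" for i
  proof (cases "w i = 0")
    case False
    have "cmod (\<eta> i) = cmod (w i) powr (p - 1)"
      using powr_add[of "cmod (w i)" 1 "p - 2"] False by (simp add: \<eta>_def norm_mult)
    then show ?thesis using assms by (simp add: powr_powr)
  qed (use assms in \<open>simp add: \<eta>_def\<close>)
  then show "ell_norm (p / (p - 1)) n \<eta> = (\<Sum>i<n. cmod (w i) powr p) powr (1 - 1 / p)"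
    using assms by (simp add: ell_norm_def field_simps)
qed

lemma sum_powr_matrix_mult_le:
  fixes G :: "nat \<Rightarrow> nat \<Rightarrow> complex"
  assumes p: "1 < p" and K: "K \<ge> 0"
    and bilinear: "\<And>\<eta> \<xi>. cmod (\<Sum>i<n. \<Sum>j<n. \<eta> i * \<xi> j * G i j)
                      \<le> K * ell_norm (p / (p - 1)) n \<eta> * ell_norm p n \<xi>"
  shows "(\<Sum>i<n. cmod (\<Sum>j<n. G i j * v j) powr p) \<le> K powr p * (\<Sum>j<n. cmod (v j) powr p)"
proof -
  define w where "w i = (\<Sum>j<n. G i j * v j)" for i
  define W where "W = (\<Sum>i<n. cmod (w i) powr p)"
  have "W \<ge> 0" unfolding W_def by (auto intro: sum_nonneg)
  obtain \<eta> where \<eta>: "(\<Sum>i<n. \<eta> i * w i) = of_real W"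
    and norm_\<eta>: "ell_norm (p / (p - 1)) n \<eta> = W powr (1 - 1 / p)"
    using norming_vector_exists[OF p] unfolding W_def by blast
  have "W = cmod (\<Sum>i<n. \<Sum>j<n. \<eta> i * v j * G i j)"
    using \<eta> \<open>W \<ge> 0\<close> by (simp add: w_def sum_distrib_left mult_ac)
  also have "\<dots> \<le> K * W powr (1 - 1 / p) * ell_norm p n v"
    using bilinear[of \<eta> v] norm_\<eta> by simp
  finally have "W powr (1 / p) * W powr (1 - 1 / p) \<le> (K * ell_norm p n v) * W powr (1 - 1 / p)"
    using \<open>W \<ge> 0\<close> by (cases "W = 0") (simp_all add: mult_ac flip: powr_add)
  then have "W powr (1 / p) \<le> K * ell_norm p n v"
    using \<open>W \<ge> 0\<close> K by (cases "W = 0") (auto simp: ell_norm_nonneg)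
  then have "(W powr (1 / p)) powr p \<le> (K * ell_norm p n v) powr p"
    using p by (intro powr_mono2) auto
  then show ?thesis
    using p K \<open>W \<ge> 0\<close>
    by (simp add: W_def w_def powr_powr powr_mult ell_norm_powr ell_norm_nonneg)
qed

lemma dense_PiE_approximation:
  fixes D :: "'b::first_countable_topology set"
  assumes "closure D = UNIV"
  obtains E where "\<And>k. E k \<in> PiE {..<n} (\<lambda>_. D)" and "\<forall>i<n. (\<lambda>k. E k i) \<longlonglongrightarrow> x i"
proof -
  have "\<forall>z. \<exists>s. (\<forall>k. s k \<in> D) \<and> s \<longlonglongrightarrow> z"
    using assms closure_sequential by blast
  then obtain s where s: "\<And>z k. s z k \<in> D" "\<And>z. s z \<longlonglongrightarrow> z"
    by metis
  show ?thesis
    by (rule that[of "\<lambda>k. restrict (\<lambda>i. s (x i) k) {..<n}"]) (use s in auto)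
qed

lemma bilinear_bound_from_dense:
  fixes G :: "nat \<Rightarrow> nat \<Rightarrow> complex"
  assumes D: "closure D = UNIV" and "p > 0" "q > 0"
    and bound: "\<forall>\<eta>\<in>PiE {..<n} (\<lambda>_. D). \<forall>\<xi>\<in>PiE {..<n} (\<lambda>_. D).
                  cmod (\<Sum>i<n. \<Sum>j<n. \<eta> i * \<xi> j * G i j) \<le> K * ell_norm q n \<eta> * ell_norm p n \<xi>"
  shows "cmod (\<Sum>i<n. \<Sum>j<n. \<eta> i * \<xi> j * G i j) \<le> K * ell_norm q n \<eta> * ell_norm p n \<xi>"
proof -
  obtain E where E: "\<And>k. E k \<in> PiE {..<n} (\<lambda>_. D)" "\<forall>i<n. (\<lambda>k. E k i) \<longlonglongrightarrow> \<eta> i"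
    using dense_PiE_approximation[OF D] by blast
  obtain X where X: "\<And>k. X k \<in> PiE {..<n} (\<lambda>_. D)" "\<forall>i<n. (\<lambda>k. X k i) \<longlonglongrightarrow> \<xi> i"
    using dense_PiE_approximation[OF D] by blast
  have "(\<lambda>k. cmod (\<Sum>i<n. \<Sum>j<n. E k i * X k j * G i j))
          \<longlonglongrightarrow> cmod (\<Sum>i<n. \<Sum>j<n. \<eta> i * \<xi> j * G i j)"
    using E(2) X(2) by (intro tendsto_intros) auto
  moreover have "(\<lambda>k. K * ell_norm q n (E k) * ell_norm p n (X k))
                   \<longlonglongrightarrow> K * ell_norm q n \<eta> * ell_norm p n \<xi>"
    by (intro tendsto_intros tendsto_ell_norm) (use assms E X in auto)
  ultimately show ?thesis
    by (rule LIMSEQ_le) (use bound E(1) X(1) in auto)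
qed

lemma countable_dense_complex_set:
  obtains D :: "complex set" where "countable D" "closure D = UNIV"
proof -
  obtain D :: "complex set"
    where "countable D" and D: "\<And>X. open X \<Longrightarrow> X \<noteq> {} \<Longrightarrow> \<exists>d\<in>D. d \<in> X"
    by (erule countable_dense_setE)
  moreover have "closure D = UNIV"
  proof (rule ccontr)
    assume "closure D \<noteq> UNIV"
    then obtain d where "d \<in> D" "d \<notin> closure D"
      using D[of "- closure D"] by auto
    then show False using closure_subset by blast
  qed
  ultimately show ?thesis using that by blast
qed

section \<open>Lebesgue spaces\<close>

lemma Lp_norm_nonneg: "Lp_norm p M f \<ge> 0"
  by (simp add: Lp_norm_def)

lemma integral_powr_nonneg: "(\<integral>x. cmod (f x) powr p \<partial>M) \<ge> 0"
  by (intro Bochner_Integration.integral_nonneg) auto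

lemma Lp_norm_powr: "p > 0 \<Longrightarrow> Lp_norm p M f powr p = (\<integral>x. cmod (f x) powr p \<partial>M)"
  using integral_powr_nonneg[where f=f and p=p and M=M] by (simp add: Lp_norm_def powr_powr)

lemma powr_one_div_le_iff:
  fixes x c p :: real
  assumes "p > 0" "x \<ge> 0" "c \<ge> 0"
  shows "x powr (1 / p) \<le> c \<longleftrightarrow> x \<le> c powr p"
proof
  assume "x powr (1 / p) \<le> c"
  then have "(x powr (1 / p)) powr p \<le> c powr p"
    using assms by (intro powr_mono2) auto
  then show "x \<le> c powr p"
    using assms by (simp add: powr_powr)
next
  assume "x \<le> c powr p"
  then have "x powr (1 / p) \<le> (c powr p) powr (1 / p)"
    using assms by (intro powr_mono2) auto
  then show "x powr (1 / p) \<le> c"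
    using assms by (simp add: powr_powr)
qed

lemma Lp_norm_le_iff:
  assumes "p > 0" "c \<ge> 0"
  shows "Lp_norm p M f \<le> c \<longleftrightarrow> (\<integral>x. cmod (f x) powr p \<partial>M) \<le> c powr p"
  unfolding Lp_norm_def using assms by (simp add: powr_one_div_le_iff integral_powr_nonneg)

lemma zero_in_Lp: "(\<lambda>x. 0) \<in> Lp p M"
  by (simp add: Lp_def)

lemma Lp_norm_zero: "Lp_norm p M (\<lambda>x. 0) = 0"
  by (simp add: Lp_norm_def)

lemma Lp_borel_measurable: "f \<in> Lp p M \<Longrightarrow> f \<in> borel_measurable M"
  by (simp add: Lp_def)

lemma Lp_integrable_powr: "f \<in> Lp p M \<Longrightarrow> integrable M (\<lambda>x. cmod (f x) powr p)"
  by (simp add: Lp_def)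

lemma Lp_mult_const:
  assumes "f \<in> Lp p M"
  shows "(\<lambda>x. c * f x) \<in> Lp p M"
  using assms by (auto simp: Lp_def norm_mult powr_mult)

lemma Lp_norm_mult_const:
  assumes "p > 0"
  shows "Lp_norm p M (\<lambda>x. c * f x) = cmod c * Lp_norm p M f"
  using assms integral_powr_nonneg[where f=f and p=p and M=M]
  by (simp add: Lp_norm_def norm_mult powr_mult powr_powr)

lemma Lp_mult_indicator:
  assumes f: "f \<in> Lp p M" and E: "E \<in> sets M"
  shows "(\<lambda>x. of_real (indicator E x) * f x) \<in> Lp p M"
proof -
  have [measurable]: "f \<in> borel_measurable M"
    using f by (rule Lp_borel_measurable)
  have "cmod (of_real (indicator E x) * f x) powr p = indicator E x * cmod (f x) powr p" for x
    by (simp add: indicator_def)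
  then show ?thesis
    using integrable_mult_indicator[OF E Lp_integrable_powr[OF f]] E by (simp add: Lp_def)
qed

lemma Lp_norm_cong_AE:
  assumes "f \<in> borel_measurable M" "g \<in> borel_measurable M" "AE x in M. f x = g x"
  shows "Lp_norm p M f = Lp_norm p M g"
proof -
  have "(\<integral>x. cmod (f x) powr p \<partial>M) = (\<integral>x. cmod (g x) powr p \<partial>M)"
    using assms by (intro integral_cong_AE) auto
  then show ?thesis by (simp add: Lp_norm_def)
qed

lemma Lp_lincomb:
  fixes u :: "nat \<Rightarrow> 'a \<Rightarrow> complex"
  assumes p: "1 < p" and u: "\<And>i. i < n \<Longrightarrow> u i \<in> Lp p M"
  shows "(\<lambda>x. \<Sum>i<n. \<eta> i * u i x) \<in> Lp p M"
    and "(\<integral>x. cmod (\<Sum>i<n. \<eta> i * u i x) powr p \<partial>M)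
           \<le> ell_norm (p / (p - 1)) n \<eta> powr p * (\<Sum>i<n. \<integral>x. cmod (u i x) powr p \<partial>M)"
proof -
  let ?C = "ell_norm (p / (p - 1)) n \<eta> powr p"
  have "(\<lambda>x. \<Sum>i<n. \<eta> i * u i x) \<in> borel_measurable M"
    using u by (intro borel_measurable_sum borel_measurable_times borel_measurable_const)
      (auto simp: Lp_def)
  have bound_int: "integrable M (\<lambda>x. ?C * (\<Sum>i<n. cmod (u i x) powr p))"
    using u by (auto intro!: Lp_integrable_powr)
  have pointwise: "cmod (\<Sum>i<n. \<eta> i * u i x) powr p \<le> ?C * (\<Sum>i<n. cmod (u i x) powr p)" for x
  proof -
    have "cmod (\<Sum>i<n. \<eta> i * u i x) powr p \<le> (ell_norm (p / (p - 1)) n \<eta> * ell_norm p n (\<lambda>i. u i x)) powr p"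
      using p by (intro powr_mono2 norm_sum_mult_le_ell_norm) auto
    then show ?thesis
      using p by (simp add: powr_mult ell_norm_nonneg ell_norm_powr)
  qed
  have int: "integrable M (\<lambda>x. cmod (\<Sum>i<n. \<eta> i * u i x) powr p)"
    by (rule Bochner_Integration.integrable_bound[OF bound_int])
       (use \<open>_ \<in> borel_measurable M\<close> pointwise in \<open>auto intro!: always_eventually simp: sum_nonneg\<close>)
  with \<open>_ \<in> borel_measurable M\<close> show "(\<lambda>x. \<Sum>i<n. \<eta> i * u i x) \<in> Lp p M"
    by (simp add: Lp_def)
  have "(\<integral>x. cmod (\<Sum>i<n. \<eta> i * u i x) powr p \<partial>M) \<le> (\<integral>x. ?C * (\<Sum>i<n. cmod (u i x) powr p) \<partial>M)"
    by (rule Bochner_Integration.integral_mono[OF int bound_int pointwise])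
  also have "\<dots> = ?C * (\<Sum>i<n. \<integral>x. cmod (u i x) powr p \<partial>M)"
    using u by (simp add: Bochner_Integration.integral_sum Lp_integrable_powr)
  finally show "(\<integral>x. cmod (\<Sum>i<n. \<eta> i * u i x) powr p \<partial>M) \<le> ?C * (\<Sum>i<n. \<integral>x. cmod (u i x) powr p \<partial>M)" .
qed

lemma Lp_sum:
  fixes u :: "nat \<Rightarrow> 'a \<Rightarrow> complex"
  assumes "1 < p" and "\<And>i. i < n \<Longrightarrow> u i \<in> Lp p M"
  shows "(\<lambda>x. \<Sum>i<n. u i x) \<in> Lp p M"
  using Lp_lincomb(1)[where \<eta>="\<lambda>_. 1" and u=u, OF assms] by simp

lemma AE_not_mem_of_integral_nonpos:
  fixes u :: "'a \<Rightarrow> real"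
  assumes u: "integrable M u" and "\<And>x. u x \<ge> 0" and "\<And>x. x \<in> E \<Longrightarrow> u x > 0"
    and "integral\<^sup>L M u \<le> 0"
  shows "AE x in M. x \<notin> E"
proof -
  have "0 \<le> integral\<^sup>L M u"
    using assms(2) by simp
  then have "integral\<^sup>L M u = 0"
    using assms(4) by simp
  then have "AE x in M. u x = 0"
    using integral_nonneg_eq_0_iff_AE[OF u] assms(2) by simp
  then show ?thesis
    by eventually_elim (use assms(3) in force)
qed

lemma AE_le_of_set_integral_le:
  fixes h k :: "'a \<Rightarrow> real"
  assumes h: "integrable M h" and k: "integrable M k"
    and le: "\<And>E. E \<in> sets M \<Longrightarrow> (\<integral>x. indicator E x * h x \<partial>M) \<le> (\<integral>x. indicator E x * k x \<partial>M)"
  shows "AE x in M. h x \<le> k x"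
proof -
  define E where "E = {x \<in> space M. k x < h x}"
  have [measurable]: "h \<in> borel_measurable M" "k \<in> borel_measurable M"
    using h k by auto
  have E: "E \<in> sets M"
    unfolding E_def by measurable
  define u where "u x = indicator E x * h x - indicator E x * k x" for x
  have "integrable M u"
    unfolding u_def using integrable_mult_indicator[OF E h] integrable_mult_indicator[OF E k] by auto
  moreover have "u x \<ge> 0" for x
    by (auto simp: u_def E_def indicator_def)
  moreover have "u x > 0" if "x \<in> E" for x
    using that by (auto simp: u_def E_def)
  moreover have "integral\<^sup>L M u \<le> 0"
    unfolding u_def using integrable_mult_indicator[OF E h] integrable_mult_indicator[OF E k] le[OF E]
    by simp
  ultimately have "AE x in M. x \<notin> E"
    by (rule AE_not_mem_of_integral_nonpos)
  then show ?thesis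
    using AE_space by eventually_elim (auto simp: E_def)
qed

section \<open>Bounded operators\<close>

lemma bounded_op_Lp: "is_bounded_op p M T \<Longrightarrow> f \<in> Lp p M \<Longrightarrow> T f \<in> Lp p M"
  by (simp add: is_bounded_op_def)

lemma bounded_op_mult_const_AE:
  "is_bounded_op p M T \<Longrightarrow> f \<in> Lp p M \<Longrightarrow> AE x in M. T (\<lambda>x. c * f x) x = c * T f x"
  by (simp add: is_bounded_op_def ae_eq_def)

lemma bounded_opE:
  assumes "is_bounded_op p M T"
  obtains C where "\<And>f. f \<in> Lp p M \<Longrightarrow> Lp_norm p M (T f) \<le> C * Lp_norm p M f"
  using assms that unfolding is_bounded_op_def by blast

lemma bdd_above_op_norm:
  assumes "is_bounded_op p M T"
  shows "bdd_above ((\<lambda>f. Lp_norm p M (T f)) ` {f \<in> Lp p M. Lp_norm p M f \<le> 1})"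
proof -
  obtain C where C: "\<And>f. f \<in> Lp p M \<Longrightarrow> Lp_norm p M (T f) \<le> C * Lp_norm p M f"
    using bounded_opE[OF assms] by blast
  show ?thesis
  proof (rule bdd_aboveI2)
    fix f assume f: "f \<in> {f \<in> Lp p M. Lp_norm p M f \<le> 1}"
    have "Lp_norm p M (T f) \<le> C * Lp_norm p M f"
      using C f by blast
    also have "\<dots> \<le> \<bar>C\<bar> * Lp_norm p M f"
      by (intro mult_right_mono) (auto simp: Lp_norm_nonneg)
    also have "\<dots> \<le> \<bar>C\<bar>"
      using f mult_left_mono[of "Lp_norm p M f" 1 "\<bar>C\<bar>"] by auto
    finally show "Lp_norm p M (T f) \<le> \<bar>C\<bar>" .
  qed
qed

lemma Lp_norm_le_op_norm_unit:
  assumes "is_bounded_op p M T" "f \<in> Lp p M" "Lp_norm p M f \<le> 1"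
  shows "Lp_norm p M (T f) \<le> op_norm p M T"
  unfolding op_norm_def by (rule cSUP_upper[OF _ bdd_above_op_norm[OF assms(1)]]) (use assms in auto)

lemma op_norm_nonneg: "is_bounded_op p M T \<Longrightarrow> op_norm p M T \<ge> 0"
  using Lp_norm_le_op_norm_unit[of p M T "\<lambda>x. 0"] Lp_norm_nonneg[of p M "T (\<lambda>x. 0)"]
  by (simp add: zero_in_Lp Lp_norm_zero)

lemma op_norm_leI:
  assumes "\<And>f. f \<in> Lp p M \<Longrightarrow> Lp_norm p M f \<le> 1 \<Longrightarrow> Lp_norm p M (T f) \<le> c"
  shows "op_norm p M T \<le> c"
proof -
  have "(\<lambda>x. 0) \<in> {f \<in> Lp p M. Lp_norm p M f \<le> 1}"
    by (simp add: zero_in_Lp Lp_norm_zero)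
  then show ?thesis
    unfolding op_norm_def by (intro cSUP_least) (use assms in auto)
qed

lemma Lp_norm_le_op_norm:
  assumes T: "is_bounded_op p M T" and p: "p > 0" and f: "f \<in> Lp p M"
  shows "Lp_norm p M (T f) \<le> op_norm p M T * Lp_norm p M f"
proof (cases "Lp_norm p M f = 0")
  case True
  obtain C where "Lp_norm p M (T f) \<le> C * Lp_norm p M f"
    using bounded_opE[OF T] f by blast
  with True show ?thesis by simp
next
  case False
  define t where "t = Lp_norm p M f"
  have "t > 0" using False Lp_norm_nonneg[of p M f] by (simp add: t_def)
  define f' where "f' = (\<lambda>x. of_real (1 / t) * f x)"
  have "Lp_norm p M f' = cmod (of_real (1 / t)) * t"
    unfolding f'_def t_def by (rule Lp_norm_mult_const[OF p])
  then have "Lp_norm p M f' \<le> 1"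
    using \<open>t > 0\<close> by (simp add: norm_divide)
  moreover have "f' \<in> Lp p M"
    unfolding f'_def by (rule Lp_mult_const[OF f])
  ultimately have f': "f' \<in> Lp p M" "Lp_norm p M f' \<le> 1" by simp_all
  have "AE x in M. T f' x = of_real (1 / t) * T f x"
    unfolding f'_def by (rule bounded_op_mult_const_AE[OF T f])
  moreover have "T f \<in> borel_measurable M" "T f' \<in> borel_measurable M"
    using bounded_op_Lp[OF T] f f'(1) by (auto intro: Lp_borel_measurable)
  ultimately have "Lp_norm p M (T f') = Lp_norm p M (\<lambda>x. of_real (1 / t) * T f x)"
    by (intro Lp_norm_cong_AE) auto
  also have "\<dots> = Lp_norm p M (T f) / t"
    using \<open>t > 0\<close> by (subst Lp_norm_mult_const[OF p]) (simp add: norm_divide)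
  finally have "Lp_norm p M (T f) / t \<le> op_norm p M T"
    using Lp_norm_le_op_norm_unit[OF T f'] by simp
  then show ?thesis
    using \<open>t > 0\<close> by (simp add: t_def pos_divide_le_eq)
qed

lemma op_norm_le_of_AE_mult:
  assumes S: "is_bounded_op p M S" and T: "is_bounded_op p M T" and p: "p > 0"
    and TS: "\<And>f. f \<in> Lp p M \<Longrightarrow> AE x in M. T f x = c * S f x"
  shows "op_norm p M T \<le> cmod c * op_norm p M S"
proof (rule op_norm_leI)
  fix f assume f: "f \<in> Lp p M" "Lp_norm p M f \<le> 1"
  have "T f \<in> borel_measurable M"
    using Lp_borel_measurable[OF bounded_op_Lp[OF T f(1)]] .
  moreover have "(\<lambda>x. c * S f x) \<in> borel_measurable M"
    using Lp_borel_measurable[OF Lp_mult_const[OF bounded_op_Lp[OF S f(1)]]] .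
  ultimately have "Lp_norm p M (T f) = Lp_norm p M (\<lambda>x. c * S f x)"
    using TS[OF f(1)] by (rule Lp_norm_cong_AE)
  also have "\<dots> = cmod c * Lp_norm p M (S f)"
    by (rule Lp_norm_mult_const[OF p])
  also have "\<dots> \<le> cmod c * (op_norm p M S * Lp_norm p M f)"
    using Lp_norm_le_op_norm[OF S p f(1)] by (simp add: mult_left_mono)
  also have "\<dots> \<le> cmod c * op_norm p M S"
    using f op_norm_nonneg[OF S] by (intro mult_left_mono) (auto intro: mult_left_le)
  finally show "Lp_norm p M (T f) \<le> cmod c * op_norm p M S" .
qed

lemma mult_op_Lp_norm_le:
  assumes g: "g \<in> borel_measurable N" and C: "AE y in N. cmod (g y) \<le> C" and "C \<ge> 0"
    and p: "p > 0" and f: "f \<in> Lp p N"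
  shows "(\<lambda>y. g y * f y) \<in> Lp p N" "Lp_norm p N (\<lambda>y. g y * f y) \<le> C * Lp_norm p N f"
proof -
  have [measurable]: "g \<in> borel_measurable N" "f \<in> borel_measurable N"
    using g f by (auto simp: Lp_def)
  have le: "AE y in N. cmod (g y * f y) powr p \<le> C powr p * cmod (f y) powr p"
    using C
  proof eventually_elim
    case (elim y)
    then have "cmod (g y * f y) \<le> C * cmod (f y)"
      by (simp add: norm_mult mult_right_mono)
    then show ?case
      using p \<open>C \<ge> 0\<close> by (simp add: powr_mono2 flip: powr_mult)
  qed
  have bound: "integrable N (\<lambda>y. C powr p * cmod (f y) powr p)"
    using Lp_integrable_powr[OF f] by simp
  have int: "integrable N (\<lambda>y. cmod (g y * f y) powr p)"
    by (rule Bochner_Integration.integrable_bound[OF bound]) (use le in \<open>auto elim!: eventually_mono\<close>)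
  then show "(\<lambda>y. g y * f y) \<in> Lp p N"
    by (simp add: Lp_def)
  have "(\<integral>y. cmod (g y * f y) powr p \<partial>N) \<le> (\<integral>y. C powr p * cmod (f y) powr p \<partial>N)"
    by (rule Bochner_Integration.integral_mono_AE[OF int bound le])
  also have "\<dots> = (C * Lp_norm p N f) powr p"
    using p \<open>C \<ge> 0\<close> by (simp add: powr_mult Lp_norm_powr Lp_norm_nonneg)
  finally show "Lp_norm p N (\<lambda>y. g y * f y) \<le> C * Lp_norm p N f"
    using p \<open>C \<ge> 0\<close> by (simp add: Lp_norm_le_iff Lp_norm_nonneg)
qed

lemma mult_op_bounded:
  assumes g: "g \<in> borel_measurable N" and C: "AE y in N. cmod (g y) \<le> C" and p: "p > 0"
  shows "is_bounded_op p N (\<lambda>f y. g y * f y)"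
proof -
  have C': "AE y in N. cmod (g y) \<le> max C 0"
    using C by eventually_elim simp
  show ?thesis
    unfolding is_bounded_op_def ae_eq_def
    using mult_op_Lp_norm_le[OF g C' _ p]
    by (auto simp: distrib_left mult.left_commute)
qed

lemma AE_norm_mult_le_op_norm:
  assumes g: "g \<in> borel_measurable N" and C: "AE y in N. cmod (g y) \<le> C"
    and p: "p > 0" and f: "f \<in> Lp p N"
  shows "AE y in N. cmod (g y * f y) \<le> op_norm p N (\<lambda>f y. g y * f y) * cmod (f y)"
proof -
  define c where "c = op_norm p N (\<lambda>f y. g y * f y)"
  have bounded: "is_bounded_op p N (\<lambda>f y. g y * f y)"
    by (rule mult_op_bounded[OF g C p])
  have "c \<ge> 0"
    unfolding c_def by (rule op_norm_nonneg[OF bounded])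
  have "AE y in N. cmod (g y * f y) powr p \<le> c powr p * cmod (f y) powr p"
  proof (rule AE_le_of_set_integral_le)
    show "integrable N (\<lambda>y. cmod (g y * f y) powr p)"
      using Lp_integrable_powr[OF bounded_op_Lp[OF bounded f]] by simp
    show "integrable N (\<lambda>y. c powr p * cmod (f y) powr p)"
      using Lp_integrable_powr[OF f] by simp
  next
    fix E assume "E \<in> sets N"
    define fE where "fE = (\<lambda>y. of_real (indicator E y) * f y)"
    have fE: "fE \<in> Lp p N"
      unfolding fE_def by (rule Lp_mult_indicator[OF f \<open>E \<in> sets N\<close>])
    have "Lp_norm p N (\<lambda>y. g y * fE y) \<le> c * Lp_norm p N fE"
      unfolding c_def using Lp_norm_le_op_norm[OF bounded p fE] by simp
    then have "(\<integral>y. cmod (g y * fE y) powr p \<partial>N) \<le> c powr p * (\<integral>y. cmod (fE y) powr p \<partial>N)"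
      using p \<open>c \<ge> 0\<close> by (simp add: Lp_norm_le_iff Lp_norm_nonneg powr_mult Lp_norm_powr)
    moreover have "cmod (g y * fE y) powr p = indicator E y * cmod (g y * f y) powr p"
      and "cmod (fE y) powr p = indicator E y * cmod (f y) powr p" for y
      by (simp_all add: fE_def indicator_def)
    moreover have "(\<lambda>y. indicator E y * (c powr p * cmod (f y) powr p))
                     = (\<lambda>y. c powr p * (indicator E y * cmod (f y) powr p))"
      by (simp add: fun_eq_iff mult_ac)
    ultimately show "(\<integral>y. indicator E y * cmod (g y * f y) powr p \<partial>N)
                       \<le> (\<integral>y. indicator E y * (c powr p * cmod (f y) powr p) \<partial>N)"
      by simp
  qed
  then show ?thesis
  proof eventually_elim
    case (elim y)
    then have "(cmod (g y * f y) powr p) powr (1 / p) \<le> c * cmod (f y)"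
      using p \<open>c \<ge> 0\<close> by (subst powr_one_div_le_iff) (auto simp: powr_mult)
    then show ?case
      using p by (simp add: powr_powr c_def)
  qed
qed

section \<open>Operator matrices\<close>

lemma Lp_n_norm_le_iff:
  assumes "p > 0" "c \<ge> 0"
  shows "Lp_n_norm p M n F \<le> c \<longleftrightarrow> (\<Sum>i<n. \<integral>x. cmod (F i x) powr p \<partial>M) \<le> c powr p"
  unfolding Lp_n_norm_def using assms
  by (simp add: Lp_norm_powr powr_one_div_le_iff sum_nonneg integral_powr_nonneg)

lemma Lp_norm_le_Lp_n_norm:
  assumes "p > 0" "j < n"
  shows "Lp_norm p M (F j) \<le> Lp_n_norm p M n F"
proof -
  have "Lp_norm p M (F j) powr p \<le> (\<Sum>i<n. Lp_norm p M (F i) powr p)"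
    by (rule member_le_sum) (use assms in auto)
  then show ?thesis
    unfolding Lp_n_norm_def using assms
    by (subst powr_one_div_le_iff[symmetric]) (auto simp: powr_powr Lp_norm_nonneg sum_nonneg)
qed

lemma Lp_n_norm_le_of_AE:
  assumes p: "p > 0" and C: "C \<ge> 0" and F: "F \<in> Lp_n p N n"
    and W: "\<And>i. i < n \<Longrightarrow> W i \<in> borel_measurable N"
    and bound: "AE y in N. (\<Sum>i<n. cmod (W i y) powr p) \<le> C powr p * (\<Sum>j<n. cmod (F j y) powr p)"
  shows "Lp_n_norm p N n W \<le> C * Lp_n_norm p N n F"
proof -
  have F_int: "integrable N (\<lambda>y. \<Sum>j<n. cmod (F j y) powr p)"
    using F by (auto simp: Lp_n_def intro!: Lp_integrable_powr)
  have W_int: "integrable N (\<lambda>y. cmod (W i y) powr p)" if i: "i < n" for i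
  proof (rule Bochner_Integration.integrable_bound[OF integrable_mult_right[OF F_int, of "C powr p"]])
    show "(\<lambda>y. cmod (W i y) powr p) \<in> borel_measurable N"
      using W[OF i] by measurable
    show "AE y in N. norm (cmod (W i y) powr p) \<le> norm (C powr p * (\<Sum>j<n. cmod (F j y) powr p))"
      using bound
    proof eventually_elim
      case (elim y)
      have "cmod (W i y) powr p \<le> (\<Sum>i<n. cmod (W i y) powr p)"
        by (rule member_le_sum) (use i in auto)
      with elim show ?case by (simp add: sum_nonneg)
    qed
  qed
  have "(\<Sum>i<n. \<integral>y. cmod (W i y) powr p \<partial>N) = (\<integral>y. (\<Sum>i<n. cmod (W i y) powr p) \<partial>N)"
    using W_int by (simp add: Bochner_Integration.integral_sum)
  also have "\<dots> \<le> (\<integral>y. C powr p * (\<Sum>j<n. cmod (F j y) powr p) \<partial>N)"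
    by (rule Bochner_Integration.integral_mono_AE) (use W_int F_int bound in auto)
  also have "\<dots> = C powr p * (\<Sum>j<n. \<integral>y. cmod (F j y) powr p \<partial>N)"
    using F by (simp add: Bochner_Integration.integral_sum Lp_n_def Lp_integrable_powr)
  also have "\<dots> = (C * Lp_n_norm p N n F) powr p"
    using p C by (simp add: powr_mult Lp_n_norm_def powr_powr sum_nonneg Lp_norm_powr)
  finally have "(\<Sum>i<n. \<integral>y. cmod (W i y) powr p \<partial>N) \<le> (C * Lp_n_norm p N n F) powr p" .
  moreover have "C * Lp_n_norm p N n F \<ge> 0"
    using C by (simp add: Lp_n_norm_def)
  ultimately show ?thesis
    using p by (simp add: Lp_n_norm_le_iff)
qed

lemma mat_norm_single:
  assumes p: "p > 0"
  shows "mat_norm p M 1 (\<lambda>i j. T) = op_norm p M T"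
proof -
  let ?S = "{F \<in> Lp_n p M 1. Lp_n_norm p M 1 F \<le> 1}"
  have Lp_1_norm: "Lp_n_norm p M 1 F = Lp_norm p M (F 0)" for F
    using p by (simp add: Lp_n_norm_def powr_powr Lp_norm_nonneg)
  have "(\<lambda>F. Lp_n_norm p M 1 (mat_apply 1 (\<lambda>i j. T) F)) ` ?S
          = (\<lambda>f. Lp_norm p M (T f)) ` ((\<lambda>F. F 0) ` ?S)"
    by (simp add: mat_apply_def Lp_1_norm[unfolded One_nat_def] image_image)
  also have "(\<lambda>F. F 0) ` ?S = {f \<in> Lp p M. Lp_norm p M f \<le> 1}"
  proof (intro equalityI subsetI)
    fix f assume "f \<in> {f \<in> Lp p M. Lp_norm p M f \<le> 1}"
    then have "(\<lambda>_. f) \<in> ?S"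
      using Lp_1_norm[of "\<lambda>_. f"] by (simp add: Lp_n_def)
    then show "f \<in> (\<lambda>F. F 0) ` ?S"
      by force
  qed (auto simp: Lp_n_def Lp_1_norm[unfolded One_nat_def])
  finally show ?thesis
    unfolding mat_norm_def op_norm_def by (simp only:)
qed

lemma mat_apply_Lp:
  assumes "1 < p" and "\<And>i j. i < n \<Longrightarrow> j < n \<Longrightarrow> is_bounded_op p M (a i j)"
    and "F \<in> Lp_n p M n" and "i < n"
  shows "mat_apply n a F i \<in> Lp p M"
proof -
  have "a i j (F j) \<in> Lp p M" if "j < n" for j
    using bounded_op_Lp[OF assms(2)[OF assms(4) that]] assms(3) that by (simp add: Lp_n_def)
  then show ?thesis
    unfolding mat_apply_def by (rule Lp_sum[OF assms(1)])
qed

lemma bdd_above_mat_norm: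
  assumes p: "1 < p" and a: "\<And>i j. i < n \<Longrightarrow> j < n \<Longrightarrow> is_bounded_op p M (a i j)"
  shows "bdd_above ((\<lambda>F. Lp_n_norm p M n (mat_apply n a F)) ` {F \<in> Lp_n p M n. Lp_n_norm p M n F \<le> 1})"
proof (rule bdd_aboveI2)
  define V where "V = ell_norm (p / (p - 1)) n (\<lambda>_. 1) powr p"
  fix F assume "F \<in> {F \<in> Lp_n p M n. Lp_n_norm p M n F \<le> 1}"
  then have F: "\<And>j. j < n \<Longrightarrow> F j \<in> Lp p M" "Lp_n_norm p M n F \<le> 1"
    by (auto simp: Lp_n_def)
  have row: "(\<integral>x. cmod (mat_apply n a F i x) powr p \<partial>M) \<le> V * (\<Sum>j<n. op_norm p M (a i j) powr p)"
    if i: "i < n" for i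
  proof -
    have "a i j (F j) \<in> Lp p M" if "j < n" for j
      using bounded_op_Lp[OF a[OF i that] F(1)[OF that]] .
    then have "(\<integral>x. cmod (\<Sum>j<n. 1 * a i j (F j) x) powr p \<partial>M)
                 \<le> V * (\<Sum>j<n. \<integral>x. cmod (a i j (F j) x) powr p \<partial>M)"
      unfolding V_def by (rule Lp_lincomb(2)[OF p])
    also have "\<dots> \<le> V * (\<Sum>j<n. op_norm p M (a i j) powr p)"
    proof (intro mult_left_mono sum_mono)
      fix j assume "j \<in> {..<n}"
      then have j: "j < n" by simp
      have "Lp_norm p M (a i j (F j)) \<le> op_norm p M (a i j) * Lp_norm p M (F j)"
        using Lp_norm_le_op_norm[OF a[OF i j] _ F(1)[OF j]] p by simp
      also have "\<dots> \<le> op_norm p M (a i j)"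
        using Lp_norm_le_Lp_n_norm[of p j n M F] F(2) p j op_norm_nonneg[OF a[OF i j]]
        by (simp add: mult_left_le)
      finally show "(\<integral>x. cmod (a i j (F j) x) powr p \<partial>M) \<le> op_norm p M (a i j) powr p"
        using p op_norm_nonneg[OF a[OF i j]] by (simp add: Lp_norm_le_iff)
    qed (simp add: V_def)
    finally show ?thesis by (simp add: mat_apply_def)
  qed
  define B where "B = (\<Sum>i<n. V * (\<Sum>j<n. op_norm p M (a i j) powr p))"
  have "B \<ge> 0"
    unfolding B_def V_def by (intro sum_nonneg mult_nonneg_nonneg) auto
  have "(\<Sum>i<n. \<integral>x. cmod (mat_apply n a F i x) powr p \<partial>M) \<le> B"
    unfolding B_def by (rule sum_mono) (use row in auto)
  then show "Lp_n_norm p M n (mat_apply n a F) \<le> B powr (1 / p)"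
    using p \<open>B \<ge> 0\<close> by (simp add: Lp_n_norm_le_iff powr_powr)
qed

lemma Lp_n_norm_le_mat_norm:
  assumes "1 < p" and "\<And>i j. i < n \<Longrightarrow> j < n \<Longrightarrow> is_bounded_op p M (a i j)"
    and "F \<in> Lp_n p M n" "Lp_n_norm p M n F \<le> 1"
  shows "Lp_n_norm p M n (mat_apply n a F) \<le> mat_norm p M n a"
  unfolding mat_norm_def
  by (rule cSUP_upper[OF _ bdd_above_mat_norm]) (use assms in auto)

lemma Lp_n_norm_const_mult:
  assumes "p > 0"
  shows "Lp_n_norm p M n (\<lambda>j x. c j * f x) = ell_norm p n c * Lp_norm p M f"
  using assms
  by (simp add: Lp_n_norm_def ell_norm_def Lp_norm_mult_const powr_mult sum_distrib_right[symmetric]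
                powr_powr Lp_norm_nonneg)

lemma Lp_norm_lincomb_le:
  assumes p: "1 < p" and U: "\<And>i. i < n \<Longrightarrow> U i \<in> Lp p M"
  shows "Lp_norm p M (\<lambda>x. \<Sum>i<n. \<eta> i * U i x) \<le> ell_norm (p / (p - 1)) n \<eta> * Lp_n_norm p M n U"
proof -
  have "(\<integral>x. cmod (\<Sum>i<n. \<eta> i * U i x) powr p \<partial>M)
          \<le> ell_norm (p / (p - 1)) n \<eta> powr p * (\<Sum>i<n. \<integral>x. cmod (U i x) powr p \<partial>M)"
    by (rule Lp_lincomb(2)[OF p U])
  also have "\<dots> = (ell_norm (p / (p - 1)) n \<eta> * Lp_n_norm p M n U) powr p"
    using p by (simp add: powr_mult ell_norm_nonneg Lp_n_norm_def powr_powr sum_nonneg Lp_norm_powr)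
  finally show ?thesis
    using p by (simp add: Lp_norm_le_iff ell_norm_nonneg Lp_n_norm_def)
qed

definition op_lincomb :: "(nat \<Rightarrow> complex) \<Rightarrow> (nat \<Rightarrow> 'a Lp_op) \<Rightarrow> nat \<Rightarrow> 'a Lp_op" where
  "op_lincomb t c m = (\<lambda>f x. \<Sum>k<m. t k * c k f x)"

lemma op_lincomb_mem:
  assumes A: "norm_closed_subalgebra p M A" and c: "\<And>k. k < m \<Longrightarrow> c k \<in> A"
  shows "op_lincomb t c m \<in> A"
  using c
proof (induction m)
  case 0
  then show ?case using A by (simp add: op_lincomb_def norm_closed_subalgebra_def)
next
  case (Suc m)
  have "op_lincomb t c (Suc m) = op_add (op_lincomb t c m) (op_scale (t m) (c m))"
    by (simp add: op_lincomb_def op_add_def op_scale_def)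
  then show ?case using Suc A by (simp add: norm_closed_subalgebra_def)
qed

lemma mat_apply_const_mult_AE:
  assumes a: "\<And>i j. i < n \<Longrightarrow> j < n \<Longrightarrow> is_bounded_op p M (a i j)" and f: "f \<in> Lp p M"
  shows "AE x in M. \<forall>i<n. mat_apply n a (\<lambda>j x. c j * f x) i x = (\<Sum>j<n. c j * a i j f x)"
proof -
  have "\<forall>ij\<in>{..<n} \<times> {..<n}. AE x in M.
          a (fst ij) (snd ij) (\<lambda>x. c (snd ij) * f x) x = c (snd ij) * a (fst ij) (snd ij) f x"
    using bounded_op_mult_const_AE[OF a f] by auto
  then have "AE x in M. \<forall>ij\<in>{..<n} \<times> {..<n}.
               a (fst ij) (snd ij) (\<lambda>x. c (snd ij) * f x) x = c (snd ij) * a (fst ij) (snd ij) f x"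
    by (intro eventually_ball_finite) auto
  then show ?thesis
    by eventually_elim (auto simp: mat_apply_def intro!: sum.cong)
qed

lemma Lp_norm_matrix_bilinear_le:
  assumes p: "1 < p" and a: "\<And>i j. i < n \<Longrightarrow> j < n \<Longrightarrow> is_bounded_op p M (a i j)"
    and norm_a: "mat_norm p M n a \<le> 1"
    and f: "f \<in> Lp p M" "Lp_norm p M f \<le> 1" and \<xi>: "ell_norm p n \<xi> = 1"
  shows "Lp_norm p M (\<lambda>x. \<Sum>i<n. \<eta> i * (\<Sum>j<n. \<xi> j * a i j f x)) \<le> ell_norm (p / (p - 1)) n \<eta>"
proof -
  define U where "U = mat_apply n a (\<lambda>j x. \<xi> j * f x)"
  have F: "(\<lambda>j x. \<xi> j * f x) \<in> Lp_n p M n"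
    using f by (simp add: Lp_n_def Lp_mult_const)
  have "Lp_n_norm p M n (\<lambda>j x. \<xi> j * f x) \<le> 1"
    using p f \<xi> by (subst Lp_n_norm_const_mult) auto
  then have "Lp_n_norm p M n U \<le> 1"
    unfolding U_def using Lp_n_norm_le_mat_norm[where a=a, OF p a F] norm_a by simp
  have U: "U i \<in> Lp p M" if "i < n" for i
    unfolding U_def using mat_apply_Lp[where a=a, OF p a F that] .
  have "AE x in M. \<forall>i<n. U i x = (\<Sum>j<n. \<xi> j * a i j f x)"
    unfolding U_def by (rule mat_apply_const_mult_AE[OF _ f(1)]) (rule a)
  then have "AE x in M. (\<Sum>i<n. \<eta> i * (\<Sum>j<n. \<xi> j * a i j f x)) = (\<Sum>i<n. \<eta> i * U i x)"
    by eventually_elim simp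
  moreover have "(\<lambda>x. \<Sum>i<n. \<eta> i * (\<Sum>j<n. \<xi> j * a i j f x)) \<in> borel_measurable M"
    using Lp_borel_measurable[OF bounded_op_Lp[OF a f(1)]]
    by (intro borel_measurable_sum borel_measurable_times borel_measurable_const) auto
  moreover have "(\<lambda>x. \<Sum>i<n. \<eta> i * U i x) \<in> borel_measurable M"
    using Lp_borel_measurable[OF Lp_lincomb(1)[OF p U]] .
  ultimately have "Lp_norm p M (\<lambda>x. \<Sum>i<n. \<eta> i * (\<Sum>j<n. \<xi> j * a i j f x))
                     = Lp_norm p M (\<lambda>x. \<Sum>i<n. \<eta> i * U i x)"
    by (intro Lp_norm_cong_AE)
  also have "\<dots> \<le> ell_norm (p / (p - 1)) n \<eta> * Lp_n_norm p M n U"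
    by (rule Lp_norm_lincomb_le[OF p U])
  also have "\<dots> \<le> ell_norm (p / (p - 1)) n \<eta>"
    using \<open>Lp_n_norm p M n U \<le> 1\<close> by (simp add: mult_left_le ell_norm_nonneg)
  finally show ?thesis .
qed

text \<open>The operator \<open>\<Sum>\<^sub>i\<^sub>j \<eta>\<^sub>i \<xi>\<^sub>j a\<^sub>i\<^sub>j\<close> is the composite of the column
  \<open>f \<mapsto> (\<xi>\<^sub>j f)\<^sub>j\<close> into \<open>L\<^sup>p(\<ell>\<^sup>p\<^sub>n)\<close> (norm \<open>\<parallel>\<xi>\<parallel>\<^sub>p\<close>), the matrix, and the row
  \<open>(u\<^sub>i)\<^sub>i \<mapsto> \<Sum>\<^sub>i \<eta>\<^sub>i u\<^sub>i\<close> (norm \<open>\<parallel>\<eta>\<parallel>\<^sub>q\<close> by Hoelder).\<close>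
lemma op_norm_matrix_bilinear_le:
  assumes p: "1 < p" and a: "\<And>i j. i < n \<Longrightarrow> j < n \<Longrightarrow> is_bounded_op p M (a i j)"
    and norm_a: "mat_norm p M n a \<le> 1"
  shows "op_norm p M (op_lincomb \<eta> (\<lambda>i. op_lincomb \<xi> (a i) n) n)
           \<le> ell_norm (p / (p - 1)) n \<eta> * ell_norm p n \<xi>"
proof (rule op_norm_leI)
  fix f assume f: "f \<in> Lp p M" "Lp_norm p M f \<le> 1"
  let ?b = "op_lincomb \<eta> (\<lambda>i. op_lincomb \<xi> (a i) n) n"
  show "Lp_norm p M (?b f) \<le> ell_norm (p / (p - 1)) n \<eta> * ell_norm p n \<xi>"
  proof (cases "ell_norm p n \<xi> = 0")
    case True
    then have "\<xi> j = 0" if "j < n" for j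
      using ell_norm_eq_0D p that by simp
    then show ?thesis by (simp add: op_lincomb_def Lp_norm_zero ell_norm_nonneg)
  next
    case False
    define r where "r = ell_norm p n \<xi>"
    have "r > 0" using False ell_norm_nonneg[of p n \<xi>] by (simp add: r_def)
    define c where "c j = of_real (1 / r) * \<xi> j" for j
    have "ell_norm p n c = 1"
      unfolding c_def using p \<open>r > 0\<close>
      by (subst ell_norm_mult_const) (auto simp: r_def[symmetric] norm_divide)
    have "?b f = (\<lambda>x. of_real r * (\<Sum>i<n. \<eta> i * (\<Sum>j<n. c j * a i j f x)))"
      using \<open>r > 0\<close> by (simp add: op_lincomb_def c_def sum_distrib_left mult_ac)
    then have "Lp_norm p M (?b f) = r * Lp_norm p M (\<lambda>x. \<Sum>i<n. \<eta> i * (\<Sum>j<n. c j * a i j f x))"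
      using p \<open>r > 0\<close> by (simp only:) (subst Lp_norm_mult_const; simp)
    also have "\<dots> \<le> r * ell_norm (p / (p - 1)) n \<eta>"
      using Lp_norm_matrix_bilinear_le[OF p a norm_a f \<open>ell_norm p n c = 1\<close>] \<open>r > 0\<close> by simp
    finally show ?thesis
      by (simp add: r_def mult.commute)
  qed
qed

section \<open>Maps into multiplication operators\<close>

locale multiplier_valued_map =
  fixes p :: real and M :: "'a measure" and N :: "'b measure"
    and A :: "'a Lp_op set" and \<phi> :: "'a Lp_op \<Rightarrow> 'b Lp_op" and g :: "'a Lp_op \<Rightarrow> 'b \<Rightarrow> complex"
  assumes p: "1 < p"
    and subalgebra: "norm_closed_subalgebra p M A"
    and multiplier: "\<And>a. a \<in> A \<Longrightarrow> \<phi> a = (\<lambda>f y. g a y * f y)"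
    and multiplier_measurable: "\<And>a. a \<in> A \<Longrightarrow> g a \<in> borel_measurable N"
    and multiplier_bounded: "\<And>a. a \<in> A \<Longrightarrow> \<exists>C. AE y in N. cmod (g a y) \<le> C"
    and additive: "\<forall>a\<in>A. \<forall>b\<in>A. op_eq p N (\<phi> (op_add a b)) (op_add (\<phi> a) (\<phi> b))"
    and homogeneous: "\<forall>c. \<forall>a\<in>A. op_eq p N (\<phi> (op_scale c a)) (op_scale c (\<phi> a))"
    and bounded: "\<exists>C. \<forall>a\<in>A. op_norm p N (\<phi> a) \<le> C * op_norm p M a"
begin

abbreviation phi_norm :: real where
  "phi_norm \<equiv> map_norm p M N A \<phi>"

lemma p_pos: "p > 0"
  using p by simp

lemma zero_mem: "(\<lambda>f x. 0) \<in> A"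
  using subalgebra by (simp add: norm_closed_subalgebra_def)

lemma op_scale_mem: "a \<in> A \<Longrightarrow> op_scale c a \<in> A"
  using subalgebra by (simp add: norm_closed_subalgebra_def)

lemma bounded_op_of_mem: "a \<in> A \<Longrightarrow> is_bounded_op p M a"
  using subalgebra by (auto simp: norm_closed_subalgebra_def)

lemma phi_bounded_op: "a \<in> A \<Longrightarrow> is_bounded_op p N (\<phi> a)"
  using multiplier_bounded[of a] mult_op_bounded[OF multiplier_measurable _ p_pos]
  by (auto simp: multiplier)

lemma phi_scale_AE: "a \<in> A \<Longrightarrow> f \<in> Lp p N \<Longrightarrow> AE y in N. \<phi> (op_scale c a) f y = c * \<phi> a f y"
  using homogeneous by (auto simp: op_eq_def ae_eq_def op_scale_def)

lemma phi_add_AE: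
  "a \<in> A \<Longrightarrow> b \<in> A \<Longrightarrow> f \<in> Lp p N \<Longrightarrow> AE y in N. \<phi> (op_add a b) f y = \<phi> a f y + \<phi> b f y"
  using additive by (auto simp: op_eq_def ae_eq_def op_add_def)

lemma multiplier_lincomb_AE:
  assumes c: "\<And>k. k < m \<Longrightarrow> c k \<in> A" and f: "f \<in> Lp p N"
  shows "AE y in N. g (op_lincomb t c m) y * f y = (\<Sum>k<m. t k * g (c k) y) * f y"
  using c
proof (induction m)
  case 0
  have "op_lincomb t c 0 = op_scale 0 (\<lambda>f x. 0)"
    by (simp add: op_lincomb_def op_scale_def)
  then show ?case
    using phi_scale_AE[OF zero_mem f, of 0] multiplier[OF zero_mem] multiplier[OF op_scale_mem[OF zero_mem]]
    by simp
next
  case (Suc m)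
  let ?S = "op_lincomb t c m"
  have S: "?S \<in> A" and cm: "c m \<in> A" and Sm: "op_lincomb t c (Suc m) \<in> A"
    using Suc.prems op_lincomb_mem[OF subalgebra] by auto
  have Suc_eq: "op_lincomb t c (Suc m) = op_add ?S (op_scale (t m) (c m))"
    by (simp add: op_lincomb_def op_add_def op_scale_def)
  have "AE y in N. \<phi> (op_lincomb t c (Suc m)) f y = \<phi> ?S f y + t m * \<phi> (c m) f y"
    unfolding Suc_eq using phi_add_AE[OF S op_scale_mem[OF cm, of "t m"] f] phi_scale_AE[OF cm f, of "t m"]
    by eventually_elim simp
  moreover have "AE y in N. g ?S y * f y = (\<Sum>k<m. t k * g (c k) y) * f y"
    using Suc by simp
  ultimately show ?case
  proof eventually_elim
    case (elim y)
    then show ?case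
      by (simp add: multiplier[OF Sm] multiplier[OF S] multiplier[OF cm] distrib_right)
  qed
qed

lemma bdd_above_map_norm: "bdd_above ((\<lambda>a. op_norm p N (\<phi> a)) ` {a \<in> A. op_norm p M a \<le> 1})"
proof -
  obtain C where C: "\<And>a. a \<in> A \<Longrightarrow> op_norm p N (\<phi> a) \<le> C * op_norm p M a"
    using bounded by blast
  show ?thesis
  proof (rule bdd_aboveI2)
    fix a assume a: "a \<in> {a \<in> A. op_norm p M a \<le> 1}"
    have "op_norm p N (\<phi> a) \<le> C * op_norm p M a"
      using C[of a] a by simp
    also have "\<dots> \<le> \<bar>C\<bar> * op_norm p M a"
      using a op_norm_nonneg[OF bounded_op_of_mem, of a] by (intro mult_right_mono) auto
    also have "\<dots> \<le> \<bar>C\<bar>"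
      using a by (simp add: mult_left_le)
    finally show "op_norm p N (\<phi> a) \<le> \<bar>C\<bar>" .
  qed
qed

lemma op_norm_phi_le_phi_norm: "a \<in> A \<Longrightarrow> op_norm p M a \<le> 1 \<Longrightarrow> op_norm p N (\<phi> a) \<le> phi_norm"
  unfolding map_norm_def by (rule cSUP_upper[OF _ bdd_above_map_norm]) auto

lemma phi_norm_nonneg: "phi_norm \<ge> 0"
proof -
  have "op_norm p M (\<lambda>f x. 0) \<le> 1"
    by (rule op_norm_leI) (simp add: Lp_norm_zero)
  then have "op_norm p N (\<phi> (\<lambda>f x. 0)) \<le> phi_norm"
    by (rule op_norm_phi_le_phi_norm[OF zero_mem])
  then show ?thesis
    using op_norm_nonneg[OF phi_bounded_op[OF zero_mem]] by simp
qed

lemma op_norm_phi_le: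
  assumes a: "a \<in> A"
  shows "op_norm p N (\<phi> a) \<le> phi_norm * op_norm p M a"
proof (cases "op_norm p M a = 0")
  case True
  obtain C where "op_norm p N (\<phi> a) \<le> C * op_norm p M a"
    using bounded a by blast
  with True show ?thesis by simp
next
  case False
  define t where "t = op_norm p M a"
  have "t > 0"
    using False op_norm_nonneg[OF bounded_op_of_mem[OF a]] by (simp add: t_def)
  define a' where "a' = op_scale (of_real (1 / t)) a"
  have a': "a' \<in> A"
    unfolding a'_def by (rule op_scale_mem[OF a])
  have "op_norm p M a' \<le> cmod (of_real (1 / t)) * op_norm p M a"
    by (rule op_norm_le_of_AE_mult[OF bounded_op_of_mem[OF a] bounded_op_of_mem[OF a'] p_pos])
       (simp add: a'_def op_scale_def)
  then have phi_a': "op_norm p N (\<phi> a') \<le> phi_norm"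
    using \<open>t > 0\<close> by (intro op_norm_phi_le_phi_norm[OF a']) (simp add: t_def[symmetric] norm_divide)
  have "op_norm p N (\<phi> a) \<le> cmod (of_real t) * op_norm p N (\<phi> a')"
  proof (rule op_norm_le_of_AE_mult[OF phi_bounded_op[OF a'] phi_bounded_op[OF a] p_pos])
    fix f assume "f \<in> Lp p N"
    from phi_scale_AE[OF a this, of "of_real (1 / t)"]
    show "AE y in N. \<phi> a f y = of_real t * \<phi> a' f y"
      unfolding a'_def by eventually_elim (use \<open>t > 0\<close> in simp)
  qed
  also have "\<dots> \<le> t * phi_norm"
    using phi_a' \<open>t > 0\<close> by simp
  finally show ?thesis
    by (simp add: t_def mult.commute)
qed

lemma AE_multiplier_bilinear_form_le:
  assumes a: "\<And>i j. i < n \<Longrightarrow> j < n \<Longrightarrow> a i j \<in> A" and norm_a: "mat_norm p M n a \<le> 1"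
    and f: "f \<in> Lp p N"
  shows "AE y in N. cmod ((\<Sum>i<n. \<Sum>j<n. \<eta> i * \<xi> j * g (a i j) y) * f y)
                      \<le> phi_norm * ell_norm (p / (p - 1)) n \<eta> * ell_norm p n \<xi> * cmod (f y)"
proof -
  define R where "R i = op_lincomb \<xi> (a i) n" for i
  define b where "b = op_lincomb \<eta> R n"
  have R: "R i \<in> A" if "i < n" for i
    unfolding R_def using a that by (intro op_lincomb_mem[OF subalgebra])
  have b: "b \<in> A"
    unfolding b_def using R by (intro op_lincomb_mem[OF subalgebra])
  have "op_norm p M b \<le> ell_norm (p / (p - 1)) n \<eta> * ell_norm p n \<xi>"
    unfolding b_def R_def
    by (rule op_norm_matrix_bilinear_le[OF p _ norm_a]) (use a bounded_op_of_mem in auto)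
  then have phi_b: "op_norm p N (\<phi> b) \<le> phi_norm * (ell_norm (p / (p - 1)) n \<eta> * ell_norm p n \<xi>)"
    using op_norm_phi_le[OF b] phi_norm_nonneg by (auto intro: order_trans mult_left_mono)
  obtain C where "AE y in N. cmod (g b y) \<le> C"
    using multiplier_bounded[OF b] by blast
  then have "AE y in N. cmod (g b y * f y) \<le> op_norm p N (\<phi> b) * cmod (f y)"
    using AE_norm_mult_le_op_norm[OF multiplier_measurable[OF b] _ p_pos f] multiplier[OF b] by simp
  moreover have "AE y in N. g b y * f y = (\<Sum>i<n. \<eta> i * g (R i) y) * f y"
    unfolding b_def by (rule multiplier_lincomb_AE[OF R f])
  moreover have "AE y in N. \<forall>i\<in>{..<n}. g (R i) y * f y = (\<Sum>j<n. \<xi> j * g (a i j) y) * f y"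
    unfolding R_def using a by (intro eventually_ball_finite ballI multiplier_lincomb_AE f) auto
  ultimately show ?thesis
  proof eventually_elim
    case (elim y)
    have "(\<Sum>i<n. \<Sum>j<n. \<eta> i * \<xi> j * g (a i j) y) * f y = (\<Sum>i<n. \<eta> i * ((\<Sum>j<n. \<xi> j * g (a i j) y) * f y))"
      by (simp add: sum_distrib_left sum_distrib_right mult_ac)
    also have "\<dots> = (\<Sum>i<n. \<eta> i * (g (R i) y * f y))"
      using elim(3) by (intro sum.cong) auto
    also have "\<dots> = g b y * f y"
      using elim(2) by (simp add: sum_distrib_left sum_distrib_right mult_ac)
    finally have "cmod ((\<Sum>i<n. \<Sum>j<n. \<eta> i * \<xi> j * g (a i j) y) * f y) = cmod (g b y * f y)"
      by (rule arg_cong)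
    also have "\<dots> \<le> op_norm p N (\<phi> b) * cmod (f y)"
      by (rule elim(1))
    also have "\<dots> \<le> phi_norm * (ell_norm (p / (p - 1)) n \<eta> * ell_norm p n \<xi>) * cmod (f y)"
      using phi_b by (rule mult_right_mono) simp
    finally show ?case
      by (simp add: mult_ac)
  qed
qed

lemma AE_multiplier_matrix_le:
  assumes a: "\<And>i j. i < n \<Longrightarrow> j < n \<Longrightarrow> a i j \<in> A" and norm_a: "mat_norm p M n a \<le> 1"
    and F: "\<And>j. j < n \<Longrightarrow> F j \<in> Lp p N"
  shows "AE y in N. (\<Sum>i<n. cmod (\<Sum>j<n. g (a i j) y * F j y) powr p)
                      \<le> phi_norm powr p * (\<Sum>j<n. cmod (F j y) powr p)"
proof -
  let ?q = "p / (p - 1)"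
  obtain D :: "complex set" where "countable D" and D: "closure D = UNIV"
    by (rule countable_dense_complex_set)
  let ?V = "PiE {..<n} (\<lambda>_. D)"
  let ?h = "\<lambda>\<eta> \<xi> y. \<Sum>i<n. \<Sum>j<n. \<eta> i * \<xi> j * g (a i j) y"
  have "countable ?V"
    using \<open>countable D\<close> by (intro countable_PiE) auto
  then have countable_V: "countable (?V \<times> ?V \<times> {..<n})"
    by (intro countable_SIGMA) auto
  have "AE y in N. \<forall>(\<eta>, \<xi>, j)\<in>?V \<times> ?V \<times> {..<n}.
          cmod (?h \<eta> \<xi> y * F j y) \<le> phi_norm * ell_norm ?q n \<eta> * ell_norm p n \<xi> * cmod (F j y)"
    unfolding AE_ball_countable[OF countable_V]
  proof (clarify)
    fix \<eta> \<xi> j assume "j < n"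
    then show "AE y in N. cmod (?h \<eta> \<xi> y * F j y) \<le> phi_norm * ell_norm ?q n \<eta> * ell_norm p n \<xi> * cmod (F j y)"
      using AE_multiplier_bilinear_form_le[OF a norm_a F[of j]] by simp
  qed
  then show ?thesis
  proof eventually_elim
    case (elim y)
    show ?case
    proof (cases "\<forall>j<n. F j y = 0")
      case True
      then show ?thesis by (simp add: sum_nonneg)
    next
      case False
      then obtain j0 where j0: "j0 < n" "F j0 y \<noteq> 0" by blast
      have "cmod (?h \<eta> \<xi> y) \<le> phi_norm * ell_norm ?q n \<eta> * ell_norm p n \<xi>"
        if "\<eta> \<in> ?V" "\<xi> \<in> ?V" for \<eta> \<xi>
        using elim that j0 by (fastforce simp: norm_mult mult_le_cancel_right)
      then have "cmod (?h \<eta> \<xi> y) \<le> phi_norm * ell_norm ?q n \<eta> * ell_norm p n \<xi>" for \<eta> \<xi>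
        using bilinear_bound_from_dense[OF D p_pos, of ?q] p by auto
      then show ?thesis
        by (rule sum_powr_matrix_mult_le[OF p phi_norm_nonneg])
    qed
  qed
qed

lemma mat_norm_phi_le:
  assumes a: "\<And>i j. i < n \<Longrightarrow> j < n \<Longrightarrow> a i j \<in> A" and norm_a: "mat_norm p M n a \<le> 1"
  shows "mat_norm p N n (\<lambda>i j. \<phi> (a i j)) \<le> phi_norm"
  unfolding mat_norm_def
proof (rule cSUP_least)
  show "{F \<in> Lp_n p N n. Lp_n_norm p N n F \<le> 1} \<noteq> {}"
    using p by (auto simp: Lp_n_def Lp_n_norm_def Lp_norm_zero zero_in_Lp intro!: exI[of _ "\<lambda>i x. 0"])
next
  fix F assume "F \<in> {F \<in> Lp_n p N n. Lp_n_norm p N n F \<le> 1}"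
  then have F: "F \<in> Lp_n p N n" "Lp_n_norm p N n F \<le> 1" by auto
  define W where "W i y = (\<Sum>j<n. g (a i j) y * F j y)" for i y
  have "W i \<in> borel_measurable N" if "i < n" for i
    unfolding W_def using multiplier_measurable[OF a[OF that]] F(1) that
    by (intro borel_measurable_sum borel_measurable_times) (auto simp: Lp_n_def Lp_borel_measurable)
  then have "Lp_n_norm p N n W \<le> phi_norm * Lp_n_norm p N n F"
    using AE_multiplier_matrix_le[OF a norm_a] F(1)
    by (intro Lp_n_norm_le_of_AE[OF p_pos phi_norm_nonneg F(1)]) (auto simp: W_def Lp_n_def)
  also have "\<dots> \<le> phi_norm"
    using F(2) phi_norm_nonneg by (simp add: mult_left_le)
  moreover have "Lp_n_norm p N n (mat_apply n (\<lambda>i j. \<phi> (a i j)) F) = Lp_n_norm p N n W"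
    unfolding Lp_n_norm_def mat_apply_def W_def
    by (intro arg_cong[where f="\<lambda>x. x powr (1 / p)"] sum.cong) (auto simp: multiplier a)
  ultimately show "Lp_n_norm p N n (mat_apply n (\<lambda>i j. \<phi> (a i j)) F) \<le> phi_norm"
    by simp
qed

lemma pcb_norm_le_phi_norm: "pcb_norm p M N A \<phi> \<le> ereal phi_norm"
  unfolding pcb_norm_def by (intro SUP_least) (auto intro: mat_norm_phi_le)

lemma op_norm_phi_le_pcb_norm:
  assumes "a \<in> A" "op_norm p M a \<le> 1"
  shows "ereal (op_norm p N (\<phi> a)) \<le> pcb_norm p M N A \<phi>"
proof -
  have "(\<lambda>i j. a) \<in> {a'. (\<forall>i<1. \<forall>j<1. a' i j \<in> A) \<and> mat_norm p M 1 a' \<le> 1}"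
    using assms mat_norm_single[OF p_pos, of M a] by simp
  then have "ereal (mat_norm p N 1 (\<lambda>i j. \<phi> a)) \<le> pcb_norm p M N A \<phi>"
    unfolding pcb_norm_def by (intro SUP_upper2[of 1]) (auto intro: SUP_upper2)
  then show ?thesis
    using mat_norm_single[OF p_pos, of N "\<phi> a"] by simp
qed

lemma phi_norm_le_pcb_norm: "ereal phi_norm \<le> pcb_norm p M N A \<phi>"
proof -
  have zero: "(\<lambda>f x. 0) \<in> {a \<in> A. op_norm p M a \<le> 1}"
    using zero_mem by (auto intro: op_norm_leI simp: Lp_norm_zero)
  obtain r where r: "pcb_norm p M N A \<phi> = ereal r"
    using pcb_norm_le_phi_norm op_norm_phi_le_pcb_norm zero by (cases "pcb_norm p M N A \<phi>") fastforce+
  have "phi_norm \<le> r"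
    unfolding map_norm_def using zero op_norm_phi_le_pcb_norm r by (intro cSUP_least) auto
  then show ?thesis
    using r by simp
qed

end

theorem mainTheorem12:
  fixes p :: real and M :: "'a measure" and N :: "'b measure"
    and A :: "'a Lp_op set" and \<phi> :: "'a Lp_op \<Rightarrow> 'b Lp_op"
  assumes "1 < p"
    and "norm_closed_subalgebra p M A"
    and "\<forall>a\<in>A. \<phi> a \<in> Linf_mult_ops N"
    and "\<forall>a\<in>A. \<forall>b\<in>A. op_eq p N (\<phi> (op_add a b)) (op_add (\<phi> a) (\<phi> b))"
    and "\<forall>c. \<forall>a\<in>A. op_eq p N (\<phi> (op_scale c a)) (op_scale c (\<phi> a))"
    and "\<exists>C. \<forall>a\<in>A. op_norm p N (\<phi> a) \<le> C * op_norm p M a"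
  shows "pcb_norm p M N A \<phi> = ereal (map_norm p M N A \<phi>)"
proof -
  have "\<forall>a\<in>A. \<exists>h. h \<in> borel_measurable N \<and> (\<exists>C. AE y in N. cmod (h y) \<le> C) \<and> \<phi> a = (\<lambda>f y. h y * f y)"
    using assms(3) by (simp add: Linf_mult_ops_def)
  then obtain g where g: "\<forall>a\<in>A. g a \<in> borel_measurable N \<and> (\<exists>C. AE y in N. cmod (g a y) \<le> C)
                                   \<and> \<phi> a = (\<lambda>f y. g a y * f y)"
    by (rule bchoice[elim_format]) blast
  interpret multiplier_valued_map p M N A \<phi> g
    by unfold_locales (use assms g in auto)
  show ?thesis
    using pcb_norm_le_phi_norm phi_norm_le_pcb_norm by (rule antisym)
qed

end
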